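(* Let $\kappa \le \mathfrak{c}$ be a cardinal of uncountable cofinality. Then there is a family $\{X_\alpha : \alpha < \mathfrak{c}\}$ of pairwise distinct subsets of $2^\omega$, each of size $\kappa$, which are pairwise homeomorphic (as subspaces of $2^\omega$), such that the spaces $\Psi(\mathcal{A}_{X_\alpha})$, $\alpha < \mathfrak{c}$, are pairwise non-homeomorphic.
   Context: For $x \in 2^\omega$ let $\widehat{x} = \{x \restriction k : k \in \omega\} \subseteq 2^{<\omega}$, and for $X \subseteq 2^\omega$ let $\mathcal{A}_X = \{\widehat{x} : x \in X\}$; this is an almost disjoint family on the countable set $2^{<\omega}$ (a family of infinite subsets any two distinct members of which have finite intersection). For an almost disjoint family $\mathcal{A}$ on a countable set $N$, the space $\Psi(\mathcal{A})$ has underlying set $N \cup \mathcal{A}$; points of $N$ are isolated, and basic neighborhoods of a point $x \in \mathcal{A}$ are the sets $\{x\} \cup (x \setminus F)$ with $F \subseteq N$ finite. *)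

theory Defs
  imports "HOL-Analysis.Analysis"
begin

definition cantor_space :: "(nat \<Rightarrow> bool) topology" where
  "cantor_space = product_topology (\<lambda>_. discrete_topology (UNIV :: bool set)) (UNIV :: nat set)"

definition restr :: "(nat \<Rightarrow> bool) \<Rightarrow> nat \<Rightarrow> bool list" where
  "restr x k = map x [0..<k]"

definition branch :: "(nat \<Rightarrow> bool) \<Rightarrow> bool list set" where
  "branch x = {restr x k | k. k \<in> (UNIV :: nat set)}"

definition AD_family :: "(nat \<Rightarrow> bool) set \<Rightarrow> bool list set set" where
  "AD_family X = branch ` X"

text \<open>Psi-space of a family A of subsets of the countable set N (= the whole type 'n).
  Points of N are Inl n, points of A are Inr a.\<close>
definition Psi_space :: "'n set set \<Rightarrow> ('n + 'n set) topology" where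
  "Psi_space A = topology_generated_by
     ({{Inl n} | n. n \<in> (UNIV :: 'n set)} \<union>
      {insert (Inr a) (Inl ` (a - F)) | a F. a \<in> A \<and> finite F})"

definition uncountable_cofinality :: "'k rel \<Rightarrow> bool" where
  "uncountable_cofinality r \<longleftrightarrow>
     (\<forall>A \<subseteq> Field r. countable A \<longrightarrow> (\<exists>x\<in>Field r. \<forall>a\<in>A. (a, x) \<in> r \<and> a \<noteq> x))"

end

theory Submission
  imports Defs
begin

text \<open>
  Fix an uncountable \<open>Z \<subseteq> 2\<^sup>\<omega>\<close> of size \<open>\<kappa>\<close> (uncountable cofinality is only needed to make
  \<open>\<kappa>\<close> uncountable) and let \<open>X\<^sub>\<alpha>\<close> be the image of \<open>Z\<close> under the embedding \<open>spread \<alpha>\<close>,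
  which writes the \<open>k\<close>-th bit of \<open>z\<close> at position \<open>2 ^ c(\<alpha>|k)\<close>, where \<open>c(\<alpha>|k)\<close> codes the
  prefix \<open>\<alpha>|k\<close> injectively and increasingly in \<open>k\<close>. All \<open>X\<^sub>\<alpha>\<close> are homeomorphic to \<open>Z\<close>, and
  two distinct elements of \<open>X\<^sub>\<alpha>\<close> first differ at a level \<open>2 ^ c(\<alpha>|k)\<close>.

  A homeomorphism \<open>\<Psi>(\<A>\<^sub>X\<^sub>\<alpha>) \<cong> \<Psi>(\<A>\<^sub>X\<^sub>\<beta>)\<close> preserves the isolated points, so it induces an
  injection \<open>f\<close> of finite sequences and an injection \<open>G : X\<^sub>\<alpha> \<rightarrow> X\<^sub>\<beta>\<close> such that beyond some
  level \<open>N x\<close>, \<open>f\<close> maps the branch of \<open>x\<close> into the branch of \<open>G x\<close>; likewise for the inverse.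
  Counting common nodes, the first differences of \<open>x, x'\<close> and of \<open>G x, G x'\<close> are within
  \<open>N\<close> of each other whenever \<open>N x = N x' = N\<close>, which happens on an infinite set by the
  pigeonhole principle. For \<open>\<alpha> \<noteq> \<beta>\<close>, the numbers \<open>2 ^ c(\<alpha>|k)\<close> and \<open>2 ^ c(\<beta>|j)\<close> are within
  \<open>N\<close> of each other only for boundedly many \<open>k\<close>, so this infinite set would have bounded
  first differences and hence be finite.
\<close>

section \<open>\<open>\<Psi>\<close>-spaces and their homeomorphisms\<close>

lemma topspace_Psi_space: "topspace (Psi_space A) = range Inl \<union> Inr ` A"
  unfolding Psi_space_def topology_generated_by_topspace by auto

lemma openin_Psi_space_Inl: "openin (Psi_space A) {Inl n}"
  unfolding Psi_space_def by (rule topology_generated_by_Basis) blast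

lemma openin_Psi_space_Inr_basic:
  assumes "a \<in> A" shows "openin (Psi_space A) (insert (Inr a) (Inl ` a))"
proof -
  have "openin (Psi_space A) (insert (Inr a) (Inl ` (a - {})))"
    unfolding Psi_space_def using assms by (intro topology_generated_by_Basis UnI2) blast
  then show ?thesis by simp
qed

lemma istopology_Inr_cofinite_nbhds:
  "istopology (\<lambda>U :: ('n + 'n set) set. \<forall>a. Inr a \<in> U \<longrightarrow> (\<exists>F. finite F \<and> Inl ` (a - F) \<subseteq> U))"
  unfolding istopology_def
proof (intro conjI allI impI)
  fix S S' :: "('n + 'n set) set" and a
  assume S: "\<forall>a. Inr a \<in> S \<longrightarrow> (\<exists>F. finite F \<and> Inl ` (a - F) \<subseteq> S)"
    and S': "\<forall>a. Inr a \<in> S' \<longrightarrow> (\<exists>F. finite F \<and> Inl ` (a - F) \<subseteq> S')"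
    and a: "Inr a \<in> S \<inter> S'"
  obtain F where "finite F" "Inl ` (a - F) \<subseteq> S"
    using S a by blast
  moreover obtain F' where "finite F'" "Inl ` (a - F') \<subseteq> S'"
    using S' a by blast
  ultimately have "finite (F \<union> F') \<and> Inl ` (a - (F \<union> F')) \<subseteq> S \<inter> S'"
    by blast
  then show "\<exists>F. finite F \<and> Inl ` (a - F) \<subseteq> S \<inter> S'" ..
next
  fix \<K> :: "('n + 'n set) set set" and a
  assume \<K>: "\<forall>K\<in>\<K>. \<forall>a. Inr a \<in> K \<longrightarrow> (\<exists>F. finite F \<and> Inl ` (a - F) \<subseteq> K)"
    and "Inr a \<in> \<Union>\<K>"
  then obtain K where K: "K \<in> \<K>" "Inr a \<in> K"
    by blast
  then obtain F where "finite F" "Inl ` (a - F) \<subseteq> K"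
    using \<K>[rule_format, OF K] by blast
  then show "\<exists>F. finite F \<and> Inl ` (a - F) \<subseteq> \<Union>\<K>"
    using K(1) by blast
qed

lemma openin_Psi_space_Inr:
  fixes A :: "'n set set"
  assumes "openin (Psi_space A) U" "Inr a \<in> U"
  obtains F where "finite F" "Inl ` (a - F) \<subseteq> U"
proof -
  let ?T = "\<lambda>U :: ('n + 'n set) set. \<forall>a. Inr a \<in> U \<longrightarrow> (\<exists>F. finite F \<and> Inl ` (a - F) \<subseteq> U)"
  have basis: "?T S" if "S \<in> {{Inl n} | n. n \<in> UNIV} \<union>
      {insert (Inr a) (Inl ` (a - F)) | a F. a \<in> A \<and> finite F}" for S
    using that
  proof (elim UnE CollectE exE conjE)
    fix a' F assume S: "S = insert (Inr a') (Inl ` (a' - F))" "finite F"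
    show "?T S"
    proof (intro allI impI)
      fix a assume "Inr a \<in> S"
      then have "a = a'"
        using S by auto
      then show "\<exists>F. finite F \<and> Inl ` (a - F) \<subseteq> S"
        using S by blast
    qed
  qed simp
  have "generate_topology_on ({{Inl n} | n. n \<in> UNIV} \<union>
      {insert (Inr a) (Inl ` (a - F)) | a F. a \<in> A \<and> finite F}) U"
    using assms(1) unfolding Psi_space_def openin_topology_generated_by_iff .
  with istopology_Inr_cofinite_nbhds basis have "?T U"
    by (rule generate_topology_on_coarsest)
  then obtain F where "finite F" "Inl ` (a - F) \<subseteq> U"
    using assms(2) by blast
  then show thesis
    by (rule that)
qed

lemma Psi_space_Inr_not_isolated:
  assumes "infinite a" shows "\<not> openin (Psi_space A) {Inr a}"
proof
  assume "openin (Psi_space A) {Inr a}"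
  then obtain F where "finite F" "Inl ` (a - F) \<subseteq> {Inr a}"
    by (rule openin_Psi_space_Inr) simp
  then have "a \<subseteq> F" by blast
  then show False using assms \<open>finite F\<close> finite_subset by blast
qed

lemma homeomorphic_map_Psi_space_Inl:
  assumes h: "homeomorphic_map (Psi_space A) (Psi_space B) h" and B: "\<forall>b\<in>B. infinite b"
  shows "h (Inl n) \<in> range Inl"
proof -
  have "Inl n \<in> topspace (Psi_space A)"
    by (simp add: topspace_Psi_space)
  then have "h (Inl n) \<in> topspace (Psi_space B)"
    using homeomorphic_imp_surjective_map[OF h] by (metis imageI)
  then consider m where "h (Inl n) = Inl m" | b where "b \<in> B" "h (Inl n) = Inr b"
    unfolding topspace_Psi_space by blast
  moreover have "openin (Psi_space B) {h (Inl n)}"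
    using homeomorphic_map_openness[OF h, of "{Inl n}"] openin_Psi_space_Inl
    by (simp add: topspace_Psi_space)
  ultimately show ?thesis
    using B Psi_space_Inr_not_isolated by (metis rangeI)
qed

lemma homeomorphic_map_Psi_space_Inr:
  assumes h: "homeomorphic_map (Psi_space A) (Psi_space B) h"
    and A: "\<forall>a\<in>A. infinite a" and "a \<in> A"
  shows "h (Inr a) \<in> Inr ` B"
proof -
  have "Inr a \<in> topspace (Psi_space A)"
    using \<open>a \<in> A\<close> by (simp add: topspace_Psi_space)
  then have "h (Inr a) \<in> topspace (Psi_space B)"
    using homeomorphic_imp_surjective_map[OF h] by (metis imageI)
  then consider m where "h (Inr a) = Inl m" | "h (Inr a) \<in> Inr ` B"
    unfolding topspace_Psi_space by blast
  moreover have "\<not> openin (Psi_space B) {h (Inr a)}"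
  proof -
    have "\<not> openin (Psi_space A) {Inr a}"
      using A \<open>a \<in> A\<close> Psi_space_Inr_not_isolated by blast
    then show ?thesis
      using homeomorphic_map_openness[OF h, of "{Inr a}"] \<open>a \<in> A\<close> by (simp add: topspace_Psi_space)
  qed
  ultimately show ?thesis
    using openin_Psi_space_Inl by metis
qed

lemma continuous_map_Psi_space_Inr:
  assumes h: "continuous_map (Psi_space A) (Psi_space B) h"
    and "a \<in> A" "b \<in> B" "h (Inr a) = Inr b"
  obtains F where "finite F" "\<And>n. n \<in> a - F \<Longrightarrow> h (Inl n) \<in> insert (Inr b) (Inl ` b)"
proof -
  let ?U = "{p \<in> topspace (Psi_space A). h p \<in> insert (Inr b) (Inl ` b)}"
  have "openin (Psi_space A) ?U"
    using openin_continuous_map_preimage[OF h openin_Psi_space_Inr_basic[OF \<open>b \<in> B\<close>]] .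
  moreover have "Inr a \<in> ?U"
    using assms by (simp add: topspace_Psi_space)
  ultimately obtain F where "finite F" "Inl ` (a - F) \<subseteq> ?U"
    by (rule openin_Psi_space_Inr)
  then show thesis
    using that by blast
qed

lemma homeomorphic_maps_Psi_space_Inl:
  assumes hk: "homeomorphic_maps (Psi_space A) (Psi_space B) h k" and B: "\<forall>b\<in>B. infinite b"
  obtains f where "inj f" "\<And>n. h (Inl n) = Inl (f n)"
proof -
  have h: "homeomorphic_map (Psi_space A) (Psi_space B) h"
    and kh: "\<And>p. p \<in> topspace (Psi_space A) \<Longrightarrow> k (h p) = p"
    using hk by (auto simp: homeomorphic_maps_map)
  define f where "f n = projl (h (Inl n))" for n
  have hf: "h (Inl n) = Inl (f n)" for n
    using homeomorphic_map_Psi_space_Inl[OF h B, of n] unfolding f_def by auto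
  moreover have "inj f"
  proof (rule injI)
    fix n m assume "f n = f m"
    then have "k (h (Inl n)) = k (h (Inl m))"
      by (simp add: hf)
    then show "n = m"
      using kh by (simp add: topspace_Psi_space)
  qed
  ultimately show thesis
    using that by blast
qed

section \<open>Branches and first differences\<close>

lemma length_restr [simp]: "length (restr x k) = k"
  by (simp add: restr_def)

lemma restr_eq_restr_iff: "restr x k = restr y j \<longleftrightarrow> k = j \<and> (\<forall>i<k. x i = y i)"
proof
  assume eq: "restr x k = restr y j"
  then have "k = j"
    by (metis length_restr)
  with eq show "k = j \<and> (\<forall>i<k. x i = y i)"
    by (simp add: restr_def map_eq_conv)
qed (simp add: restr_def map_eq_conv)

lemma inj_restr: "inj (restr x)"
  by (rule injI) (simp add: restr_eq_restr_iff)

lemma branch_eq_range: "branch x = range (restr x)"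
  unfolding branch_def by auto

lemma infinite_branch: "infinite (branch x)"
  unfolding branch_eq_range using inj_restr range_inj_infinite by blast

lemma inj_branch: "inj branch"
proof (rule injI, rule ext)
  fix x y i assume "branch x = branch y"
  then have "restr x (Suc i) \<in> range (restr y)"
    by (metis branch_eq_range rangeI)
  then show "x i = y i"
    by (auto simp: restr_eq_restr_iff)
qed

definition first_diff :: "(nat \<Rightarrow> 'a) \<Rightarrow> (nat \<Rightarrow> 'a) \<Rightarrow> nat" where
  "first_diff x y = (LEAST i. x i \<noteq> y i)"

lemma first_diff_neq: "x \<noteq> y \<Longrightarrow> x (first_diff x y) \<noteq> y (first_diff x y)"
  unfolding first_diff_def by (rule LeastI_ex) (meson ext)

lemma less_first_diff_eq: "i < first_diff x y \<Longrightarrow> x i = y i"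
  unfolding first_diff_def using not_less_Least by blast

lemma first_diff_eqI:
  assumes "x d \<noteq> y d" "\<And>i. i < d \<Longrightarrow> x i = y i"
  shows "first_diff x y = d"
  unfolding first_diff_def using assms by (intro Least_equality) (auto simp: not_less[symmetric])

lemma restr_eq_restr_imp_le_first_diff:
  assumes "x \<noteq> y" "restr x k = restr y j"
  shows "k \<le> first_diff x y"
  using assms first_diff_neq[of x y] by (auto simp: restr_eq_restr_iff not_le)

lemma finite_if_first_diff_bounded:
  fixes S :: "(nat \<Rightarrow> bool) set"
  assumes "\<And>x x'. x \<in> S \<Longrightarrow> x' \<in> S \<Longrightarrow> x \<noteq> x' \<Longrightarrow> first_diff x x' \<le> M"
  shows "finite S"
proof -
  have "inj_on (\<lambda>x. restr x (Suc M)) S"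
  proof (rule inj_onI, rule ccontr)
    fix x x' assume "x \<in> S" "x' \<in> S" and eq: "restr x (Suc M) = restr x' (Suc M)" and "x \<noteq> x'"
    then have "first_diff x x' < Suc M"
      using assms by (simp add: le_imp_less_Suc)
    then have "x (first_diff x x') = x' (first_diff x x')"
      using eq by (simp add: restr_eq_restr_iff)
    then show False
      using first_diff_neq \<open>x \<noteq> x'\<close> by blast
  qed
  moreover have "(\<lambda>x. restr x (Suc M)) ` S \<subseteq> {xs. set xs \<subseteq> UNIV \<and> length xs = Suc M}"
    by auto
  moreover have "finite {xs. set xs \<subseteq> (UNIV :: bool set) \<and> length xs = Suc M}"
    by (rule finite_lists_length_eq) simp
  ultimately show ?thesis
    using finite_imageD finite_subset by blast
qed

text \<open>\<open>f\<close> sends the common nodes of \<open>x\<close> and \<open>x'\<close> of length at least \<open>n\<close> injectively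
  to common nodes of \<open>y\<close> and \<open>y'\<close>; counting both sides gives the bound.\<close>
lemma first_diff_le_first_diff_add:
  assumes f: "inj f" and "x \<noteq> x'" "y \<noteq> y'"
    and x: "\<And>j. n \<le> j \<Longrightarrow> f (restr x j) \<in> branch y"
    and x': "\<And>j. n \<le> j \<Longrightarrow> f (restr x' j) \<in> branch y'"
  shows "first_diff x x' \<le> first_diff y y' + n"
proof -
  let ?d = "first_diff x x'" and ?e = "first_diff y y'"
  have "f (restr x j) \<in> restr y ` {..?e}" if j: "j \<in> {n..?d}" for j
  proof -
    have "restr x j = restr x' j"
      using j less_first_diff_eq[of _ x x'] by (auto simp: restr_eq_restr_iff)
    then have "f (restr x j) \<in> range (restr y')"
      using x' j by (simp add: branch_eq_range)
    moreover obtain i where i: "f (restr x j) = restr y i"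
      using x j by (auto simp: branch_eq_range)
    ultimately obtain i' where "restr y i = restr y' i'"
      by (metis rangeE)
    then have "i \<le> ?e"
      using \<open>y \<noteq> y'\<close> by (rule_tac restr_eq_restr_imp_le_first_diff)
    then show ?thesis
      using i by auto
  qed
  then have sub: "(f \<circ> restr x) ` {n..?d} \<subseteq> restr y ` {..?e}"
    by auto
  have "inj (f \<circ> restr x)"
    using f inj_restr by (rule inj_compose)
  then have "card {n..?d} = card ((f \<circ> restr x) ` {n..?d})"
    by (rule card_image[symmetric, OF inj_on_subset[OF _ subset_UNIV]])
  also have "\<dots> \<le> card (restr y ` {..?e})"
    using sub by (intro card_mono) auto
  also have "\<dots> \<le> card {..?e}"
    by (rule card_image_le) simp
  finally show ?thesis
    by simp
qed

lemma continuous_map_Psi_space_branch_eventually: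
  assumes h: "continuous_map (Psi_space (AD_family X)) (Psi_space (AD_family Y)) h"
    and "x \<in> X" "y \<in> Y" "h (Inr (branch x)) = Inr (branch y)"
    and f: "\<And>c. h (Inl c) = Inl (f c)"
  shows "\<forall>\<^sub>F j in sequentially. f (restr x j) \<in> branch y"
proof -
  obtain F where "finite F" and F: "\<And>c. c \<in> branch x - F \<Longrightarrow> h (Inl c) \<in> insert (Inr (branch y)) (Inl ` branch y)"
    using continuous_map_Psi_space_Inr[OF h] assms(2-4) unfolding AD_family_def by blast
  have "{j. f (restr x j) \<notin> branch y} \<subseteq> restr x -` F"
    using F by (force simp: f branch_eq_range)
  moreover have "finite (restr x -` F)"
    using \<open>finite F\<close> inj_restr by (rule finite_vimageI)
  ultimately show ?thesis
    unfolding cofinite_eq_sequentially[symmetric] eventually_cofinite by (rule finite_subset)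
qed

lemma homeomorphic_Psi_space_AD_family_imp_branch_correspondence:
  assumes "Psi_space (AD_family X) homeomorphic_space Psi_space (AD_family Y)"
  obtains f f' :: "bool list \<Rightarrow> bool list" and G where "inj f" "inj f'" "inj_on G X" "G ` X \<subseteq> Y"
    "\<And>x. x \<in> X \<Longrightarrow> \<forall>\<^sub>F j in sequentially. f (restr x j) \<in> branch (G x) \<and> f' (restr (G x) j) \<in> branch x"
proof -
  obtain h k where hk: "homeomorphic_maps (Psi_space (AD_family X)) (Psi_space (AD_family Y)) h k"
    using assms unfolding homeomorphic_space_def by blast
  then have h: "homeomorphic_map (Psi_space (AD_family X)) (Psi_space (AD_family Y)) h"
    and kh: "\<And>p. p \<in> topspace (Psi_space (AD_family X)) \<Longrightarrow> k (h p) = p"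
    by (auto simp: homeomorphic_maps_map)
  have k: "continuous_map (Psi_space (AD_family Y)) (Psi_space (AD_family X)) k"
    using hk unfolding homeomorphic_maps_def by blast
  have infinite: "\<forall>a\<in>AD_family Z. infinite a" for Z
    unfolding AD_family_def using infinite_branch by blast
  obtain f where "inj f" and hf: "\<And>c. h (Inl c) = Inl (f c)"
    using homeomorphic_maps_Psi_space_Inl[OF hk infinite] by blast
  obtain f' where "inj f'" and kf': "\<And>c. k (Inl c) = Inl (f' c)"
    using homeomorphic_maps_Psi_space_Inl[OF homeomorphic_maps_sym[THEN iffD1, OF hk] infinite] by blast
  have "\<exists>y. y \<in> Y \<and> h (Inr (branch x)) = Inr (branch y)" if "x \<in> X" for x
    using homeomorphic_map_Psi_space_Inr[OF h infinite, of "branch x"] that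
    unfolding AD_family_def by blast
  then obtain G where GY: "\<And>x. x \<in> X \<Longrightarrow> G x \<in> Y"
    and hG: "\<And>x. x \<in> X \<Longrightarrow> h (Inr (branch x)) = Inr (branch (G x))"
    by metis
  have kG: "k (Inr (branch (G x))) = Inr (branch x)" if "x \<in> X" for x
    using kh[of "Inr (branch x)"] hG[OF that] that by (simp add: topspace_Psi_space AD_family_def)
  have "inj_on G X"
  proof (rule inj_onI)
    fix x x' assume "x \<in> X" "x' \<in> X" "G x = G x'"
    then have "branch x = branch x'"
      using kG by (metis Inr_inject)
    then show "x = x'"
      using inj_branch by (simp add: inj_eq)
  qed
  moreover have "\<forall>\<^sub>F j in sequentially. f (restr x j) \<in> branch (G x) \<and> f' (restr (G x) j) \<in> branch x"
    if "x \<in> X" for x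
  proof -
    have "\<forall>\<^sub>F j in sequentially. f (restr x j) \<in> branch (G x)"
      using homeomorphic_imp_continuous_map[OF h] that GY[OF that] hG[OF that] hf
      by (rule continuous_map_Psi_space_branch_eventually)
    moreover have "\<forall>\<^sub>F j in sequentially. f' (restr (G x) j) \<in> branch x"
      using k GY[OF that] that kG[OF that] kf'
      by (rule continuous_map_Psi_space_branch_eventually)
    ultimately show ?thesis
      by (rule eventually_conj)
  qed
  ultimately show thesis
    using that \<open>inj f\<close> \<open>inj f'\<close> GY by blast
qed

section \<open>Spreading sequences along coded levels\<close>

text \<open>\<open>prefix_code \<alpha> k\<close> is the number with binary digits \<open>1 \<alpha>\<^sub>0 \<dots> \<alpha>\<^sub>k\<^sub>-\<^sub>1\<close>.\<close>
fun prefix_code :: "(nat \<Rightarrow> bool) \<Rightarrow> nat \<Rightarrow> nat" where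
  "prefix_code \<alpha> 0 = 1"
| "prefix_code \<alpha> (Suc k) = 2 * prefix_code \<alpha> k + (if \<alpha> k then 1 else 0)"

lemma prefix_code_bounds: "2 ^ k \<le> prefix_code \<alpha> k \<and> prefix_code \<alpha> k < 2 ^ Suc k"
  by (induction k) auto

lemma strict_mono_prefix_code: "strict_mono (prefix_code \<alpha>)"
proof (rule strict_mono_Suc_iff[THEN iffD2], intro allI)
  fix k
  have "(0::nat) < 2 ^ k"
    by simp
  then show "prefix_code \<alpha> k < prefix_code \<alpha> (Suc k)"
    using prefix_code_bounds[of k \<alpha>] by simp
qed

lemma prefix_code_eqD:
  assumes "prefix_code \<alpha> k = prefix_code \<beta> j"
  shows "k = j" "\<forall>i<k. \<alpha> i = \<beta> i"
proof -
  show "k = j"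
  proof (rule ccontr)
    assume "k \<noteq> j"
    then have "2 ^ Suc (min k j) \<le> (2::nat) ^ max k j"
      by (intro power_increasing) auto
    then show False
      using assms prefix_code_bounds[of k \<alpha>] prefix_code_bounds[of j \<beta>]
      by (cases "k \<le> j") (auto simp: min_def max_def)
  qed
  show "\<forall>i<k. \<alpha> i = \<beta> i"
    using assms unfolding \<open>k = j\<close>
  proof (induction j)
    case (Suc j)
    then have "\<alpha> j = \<beta> j \<and> prefix_code \<alpha> j = prefix_code \<beta> j"
      by (auto split: if_splits) presburger+
    then show ?case
      using Suc.IH less_Suc_eq by auto
  qed simp
qed

definition spread_level :: "(nat \<Rightarrow> bool) \<Rightarrow> nat \<Rightarrow> nat" where
  "spread_level \<alpha> k = 2 ^ prefix_code \<alpha> k"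

definition spread :: "(nat \<Rightarrow> bool) \<Rightarrow> (nat \<Rightarrow> bool) \<Rightarrow> (nat \<Rightarrow> bool)" where
  "spread \<alpha> z i \<longleftrightarrow> (\<exists>k. spread_level \<alpha> k = i \<and> z k)"

definition unspread :: "(nat \<Rightarrow> bool) \<Rightarrow> (nat \<Rightarrow> bool) \<Rightarrow> (nat \<Rightarrow> bool)" where
  "unspread \<alpha> x k = x (spread_level \<alpha> k)"

lemma strict_mono_spread_level: "strict_mono (spread_level \<alpha>)"
  using strict_mono_prefix_code[of \<alpha>] unfolding spread_level_def strict_mono_def by simp

lemma spread_at_spread_level [simp]: "spread \<alpha> z (spread_level \<alpha> k) = z k"
  unfolding spread_def using strict_mono_eq[OF strict_mono_spread_level] by auto

lemma unspread_spread [simp]: "unspread \<alpha> (spread \<alpha> z) = z"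
  unfolding unspread_def by auto

lemma inj_spread: "inj (spread \<alpha>)"
  by (metis injI unspread_spread)

lemma first_diff_spread:
  assumes "z \<noteq> z'"
  shows "first_diff (spread \<alpha> z) (spread \<alpha> z') = spread_level \<alpha> (first_diff z z')"
proof (rule first_diff_eqI)
  show "spread \<alpha> z (spread_level \<alpha> (first_diff z z')) \<noteq> spread \<alpha> z' (spread_level \<alpha> (first_diff z z'))"
    using first_diff_neq[OF assms] by simp
next
  fix i assume i: "i < spread_level \<alpha> (first_diff z z')"
  show "spread \<alpha> z i = spread \<alpha> z' i"
  proof (cases "i \<in> range (spread_level \<alpha>)")
    case True
    then obtain k where "i = spread_level \<alpha> k" by blast
    moreover from this i have "k < first_diff z z'"
      using strict_mono_less[OF strict_mono_spread_level] by blast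
    ultimately show ?thesis
      using less_first_diff_eq by simp
  qed (auto simp: spread_def)
qed

lemma two_power_le_if_close:
  assumes "(a::nat) \<noteq> b" "2 ^ a \<le> (2::nat) ^ b + N" "2 ^ b \<le> (2::nat) ^ a + N"
  shows "2 ^ a \<le> 2 * N"
proof (cases "a < b")
  case True
  then have "2 ^ Suc a \<le> (2::nat) ^ b" by (intro power_increasing) auto
  then show ?thesis using assms(3) by simp
next
  case False
  then have "2 ^ Suc b \<le> (2::nat) ^ a" using assms(1) by (intro power_increasing) auto
  then show ?thesis using assms(2) by simp
qed

lemma spread_levels_close_bounded:
  assumes "\<alpha> \<noteq> \<beta>"
  obtains K where "\<And>k j. spread_level \<alpha> k \<le> spread_level \<beta> j + N \<Longrightarrow>
    spread_level \<beta> j \<le> spread_level \<alpha> k + N \<Longrightarrow> k \<le> K"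
proof -
  obtain i0 where i0: "\<alpha> i0 \<noteq> \<beta> i0"
    using assms by auto
  have "k \<le> i0 + 2 * N"
    if close: "spread_level \<alpha> k \<le> spread_level \<beta> j + N" "spread_level \<beta> j \<le> spread_level \<alpha> k + N"
    for k j
  proof (cases "prefix_code \<alpha> k = prefix_code \<beta> j")
    case True
    then show ?thesis
      using prefix_code_eqD(2) i0 not_le by fastforce
  next
    case False
    then have "2 ^ prefix_code \<alpha> k \<le> 2 * N"
      using two_power_le_if_close close unfolding spread_level_def by blast
    moreover have "k < prefix_code \<alpha> k"
      using prefix_code_bounds[of k \<alpha>] less_exp[of k] by linarith
    ultimately show ?thesis
      using less_exp[of "prefix_code \<alpha> k"] by linarith
  qed
  then show thesis
    using that by blast
qed

lemma topspace_cantor_space [simp]: "topspace cantor_space = UNIV"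
  unfolding cantor_space_def by simp

lemma continuous_map_unspread: "continuous_map cantor_space cantor_space (unspread \<alpha>)"
  unfolding cantor_space_def unspread_def continuous_map_componentwise_UNIV
  by (auto intro: continuous_map_product_projection)

lemma continuous_map_spread: "continuous_map cantor_space cantor_space (spread \<alpha>)"
  unfolding cantor_space_def continuous_map_componentwise_UNIV
proof
  fix i
  show "continuous_map (product_topology (\<lambda>_. discrete_topology UNIV) UNIV) (discrete_topology UNIV)
          (\<lambda>z. spread \<alpha> z i)"
  proof (cases "i \<in> range (spread_level \<alpha>)")
    case True
    then obtain k where "i = spread_level \<alpha> k" by blast
    then show ?thesis
      using continuous_map_product_projection[of k UNIV "\<lambda>_. discrete_topology (UNIV :: bool set)"]
      by simp
  next
    case False
    then have "(\<lambda>z. spread \<alpha> z i) = (\<lambda>z. False)"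
      by (auto simp: spread_def)
    then show ?thesis
      by simp
  qed
qed

lemma homeomorphic_space_spread_image:
  "subtopology cantor_space Z homeomorphic_space subtopology cantor_space (spread \<alpha> ` Z)"
proof -
  have "continuous_map (subtopology cantor_space Z) (subtopology cantor_space (spread \<alpha> ` Z)) (spread \<alpha>)"
    by (rule continuous_map_into_subtopology) (auto intro: continuous_map_from_subtopology continuous_map_spread)
  moreover have "continuous_map (subtopology cantor_space (spread \<alpha> ` Z)) (subtopology cantor_space Z) (unspread \<alpha>)"
    by (rule continuous_map_into_subtopology) (auto intro: continuous_map_from_subtopology continuous_map_unspread)
  ultimately have "homeomorphic_maps (subtopology cantor_space Z) (subtopology cantor_space (spread \<alpha> ` Z))
      (spread \<alpha>) (unspread \<alpha>)"
    unfolding homeomorphic_maps_def by auto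
  then show ?thesis
    unfolding homeomorphic_space_def by blast
qed

section \<open>Distinct codes give non-homeomorphic \<open>\<Psi>\<close>-spaces\<close>

lemma uncountable_imp_infinite_fibre:
  fixes N :: "'a \<Rightarrow> 'b::countable"
  assumes "uncountable X"
  shows "\<exists>n. infinite {x \<in> X. N x = n}"
proof (rule ccontr)
  assume "\<nexists>n. infinite {x \<in> X. N x = n}"
  then have "countable {x \<in> X. N x = n}" for n
    by (simp add: countable_finite)
  then have "countable (\<Union>n. {x \<in> X. N x = n})"
    by (intro countable_UN) auto
  moreover have "X = (\<Union>n. {x \<in> X. N x = n})"
    by blast
  ultimately show False
    using assms by simp
qed

lemma not_homeomorphic_Psi_space_spread_images:
  assumes "\<alpha> \<noteq> \<beta>" "uncountable Z"
  shows "\<not> Psi_space (AD_family (spread \<alpha> ` Z)) homeomorphic_space Psi_space (AD_family (spread \<beta> ` Z))"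
proof
  assume "Psi_space (AD_family (spread \<alpha> ` Z)) homeomorphic_space Psi_space (AD_family (spread \<beta> ` Z))"
  then obtain f f' G where "inj f" "inj f'" "inj_on G (spread \<alpha> ` Z)" and GZ: "G ` spread \<alpha> ` Z \<subseteq> spread \<beta> ` Z"
    and ev: "\<And>x. x \<in> spread \<alpha> ` Z \<Longrightarrow>
      \<forall>\<^sub>F j in sequentially. f (restr x j) \<in> branch (G x) \<and> f' (restr (G x) j) \<in> branch x"
    by (elim homeomorphic_Psi_space_AD_family_imp_branch_correspondence) blast
  obtain N where N: "\<And>x j. x \<in> spread \<alpha> ` Z \<Longrightarrow> N x \<le> j \<Longrightarrow>
      f (restr x j) \<in> branch (G x) \<and> f' (restr (G x) j) \<in> branch x"
    using ev unfolding eventually_sequentially by metis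
  have "uncountable (spread \<alpha> ` Z)"
    using assms(2) inj_spread countable_image_inj_on by (metis inj_on_subset subset_UNIV)
  then obtain n where infinite: "infinite {x \<in> spread \<alpha> ` Z. N x = n}"
    using uncountable_imp_infinite_fibre by blast
  obtain K where K: "\<And>k j. spread_level \<alpha> k \<le> spread_level \<beta> j + n \<Longrightarrow>
      spread_level \<beta> j \<le> spread_level \<alpha> k + n \<Longrightarrow> k \<le> K"
    using spread_levels_close_bounded[OF assms(1)] by blast
  have "first_diff x x' \<le> spread_level \<alpha> K"
    if x: "x \<in> {x \<in> spread \<alpha> ` Z. N x = n}" and x': "x' \<in> {x \<in> spread \<alpha> ` Z. N x = n}" and "x \<noteq> x'"
    for x x'
  proof -
    obtain z z' where z: "x = spread \<alpha> z" "x' = spread \<alpha> z'"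
      using x x' by blast
    obtain w w' where w: "G x = spread \<beta> w" "G x' = spread \<beta> w'"
      using x x' GZ by blast
    have "G x \<noteq> G x'"
      using \<open>inj_on G _\<close> x x' \<open>x \<noteq> x'\<close> by (auto dest: inj_onD)
    have "first_diff x x' \<le> first_diff (G x) (G x') + n"
      using \<open>inj f\<close> \<open>x \<noteq> x'\<close> \<open>G x \<noteq> G x'\<close> by (rule first_diff_le_first_diff_add) (use N x x' in auto)
    moreover have "first_diff (G x) (G x') \<le> first_diff x x' + n"
      using \<open>inj f'\<close> \<open>G x \<noteq> G x'\<close> \<open>x \<noteq> x'\<close> by (rule first_diff_le_first_diff_add) (use N x x' in auto)
    ultimately have "first_diff z z' \<le> K"
      using K z w \<open>x \<noteq> x'\<close> \<open>G x \<noteq> G x'\<close> by (metis first_diff_spread)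
    then show ?thesis
      using z \<open>x \<noteq> x'\<close> first_diff_spread strict_mono_less_eq[OF strict_mono_spread_level] by metis
  qed
  then have "finite {x \<in> spread \<alpha> ` Z. N x = n}"
    by (rule finite_if_first_diff_bounded)
  then show False
    using infinite by contradiction
qed

lemma ordLeq_card_of_imp_subset_ordIso:
  assumes "Card_order r" "(r, card_of A) \<in> ordLeq"
  obtains B where "B \<subseteq> A" "(card_of B, r) \<in> ordIso"
proof -
  have "(card_of (Field r), card_of A) \<in> ordLeq"
    using card_of_Field_ordIso[OF assms(1)] assms(2) by (rule ordIso_ordLeq_trans)
  then obtain B where "B \<subseteq> A" "(card_of (Field r), card_of B) \<in> ordIso"
    using internalize_card_of_ordLeq2[of "Field r" A] by blast
  moreover have "(card_of B, r) \<in> ordIso"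
    using calculation(2) card_of_Field_ordIso[OF assms(1)] ordIso_symmetric ordIso_transitive by blast
  ultimately show thesis
    using that by blast
qed

lemma uncountable_cofinality_imp_uncountable:
  assumes "Card_order r" "uncountable_cofinality r" "(card_of A, r) \<in> ordIso"
  shows "uncountable A"
proof -
  have "uncountable (Field r)"
    using assms(2) unfolding uncountable_cofinality_def by blast
  moreover have "(card_of A, card_of (Field r)) \<in> ordIso"
    using assms(3) card_of_Field_ordIso[OF assms(1)] ordIso_symmetric ordIso_transitive by blast
  then obtain f where "bij_betw f A (Field r)"
    using card_of_ordIso by blast
  ultimately show ?thesis
    by simp
qed

theorem theorem14:
  fixes \<kappa> :: "'k rel"
  assumes "Card_order \<kappa>"
    and "(\<kappa>, card_of (UNIV :: (nat \<Rightarrow> bool) set)) \<in> ordLeq"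
    and "uncountable_cofinality \<kappa>"
  shows "\<exists>X :: (nat \<Rightarrow> bool) \<Rightarrow> (nat \<Rightarrow> bool) set.
           inj X \<and>
           (\<forall>\<alpha>. (card_of (X \<alpha>), \<kappa>) \<in> ordIso) \<and>
           (\<forall>\<alpha> \<beta>. subtopology cantor_space (X \<alpha>) homeomorphic_space subtopology cantor_space (X \<beta>)) \<and>
           (\<forall>\<alpha> \<beta>. \<alpha> \<noteq> \<beta> \<longrightarrow>
              \<not> (Psi_space (AD_family (X \<alpha>)) homeomorphic_space Psi_space (AD_family (X \<beta>))))"
proof -
  obtain Z :: "(nat \<Rightarrow> bool) set" where Z: "(card_of Z, \<kappa>) \<in> ordIso"
    using ordLeq_card_of_imp_subset_ordIso[OF assms(1,2)] by blast
  have "uncountable Z"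
    using assms(1,3) Z by (rule uncountable_cofinality_imp_uncountable)
  define X where "X \<alpha> = spread \<alpha> ` Z" for \<alpha>
  have nonhom: "\<not> Psi_space (AD_family (X \<alpha>)) homeomorphic_space Psi_space (AD_family (X \<beta>))"
    if "\<alpha> \<noteq> \<beta>" for \<alpha> \<beta>
    unfolding X_def using that \<open>uncountable Z\<close> by (rule not_homeomorphic_Psi_space_spread_images)
  then have "inj X"
    by (metis injI homeomorphic_space_refl)
  moreover have "(card_of (X \<alpha>), \<kappa>) \<in> ordIso" for \<alpha>
  proof -
    have "bij_betw (spread \<alpha>) Z (X \<alpha>)"
      unfolding X_def using inj_spread by (metis bij_betw_imageI inj_on_subset subset_UNIV)
    then show ?thesis
      using Z card_of_ordIso ordIso_symmetric ordIso_transitive by metis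
  qed
  moreover have "subtopology cantor_space (X \<alpha>) homeomorphic_space subtopology cantor_space (X \<beta>)" for \<alpha> \<beta>
    unfolding X_def
    using homeomorphic_space_spread_image homeomorphic_space_sym homeomorphic_space_trans by metis
  ultimately show ?thesis
    using nonhom by blast
qed

end
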